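(* Let $R$ be an associative unital division ring over a field of characteristic $0$ with a derivation $'$ (write $\varphi^{(k)}$ for the $k$-th derivative). Let $\varphi\in R$ and for $n\geq1$ put $$\Theta_n=\bigl(\varphi^{(i+j-2)}\bigr)_{1\leq i,j\leq n},\qquad \theta_n=|\Theta_n|_{nn},$$ with the convention $\theta_0^{-1}:=0$, assuming all quasideterminants involved are defined and all $\theta_n$ invertible. Then for all $n\geq1$, $$\bigl(\theta_n'\theta_n^{-1}\bigr)'=\theta_{n+1}\theta_n^{-1}-\theta_n\theta_{n-1}^{-1}.$$
   Context: For an $n\times n$ matrix $X$ over $R$, $|X|_{ij}=x_{ij}-r_i^j(X^{ij})^{-1}c_j^i$, where $X^{ij}$ is $X$ with row $i$ and column $j$ removed, $r_i^j$ is row $i$ without its $j$-th entry and $c_j^i$ is column $j$ without its $i$-th entry; for $n=1$, $|X|_{11}=x_{11}$. *)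

theory Defs
  imports "Jordan_Normal_Form.Determinant"
begin

definition derivation :: "('a::ring \<Rightarrow> 'a) \<Rightarrow> bool" where
  "derivation D \<longleftrightarrow> (\<forall>a b. D (a + b) = D a + D b) \<and> (\<forall>a b. D (a * b) = D a * b + a * D b)"

definition mat_inv :: "'a::semiring_1 mat \<Rightarrow> 'a mat" where
  "mat_inv B = (SOME C. inverts_mat B C \<and> inverts_mat C B)"

definition qdet_defined :: "'a::semiring_1 mat \<Rightarrow> nat \<Rightarrow> nat \<Rightarrow> bool" where
  "qdet_defined X i j \<longleftrightarrow> dim_row X = dim_col X \<and> i < dim_row X \<and> j < dim_col X \<and>
     (dim_row X = 1 \<or> invertible_mat (mat_delete X i j))"

text \<open>|X|_{ij} = x_{ij} - r_i^j (X^{ij})^{-1} c_j^i (indices 0-based).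
  For a 1x1 matrix the sum is empty, so |X|_{11} = x_{11}.\<close>
definition qdet :: "'a::ring_1 mat \<Rightarrow> nat \<Rightarrow> nat \<Rightarrow> 'a" where
  "qdet X i j = X $$ (i, j) -
     (\<Sum>k < dim_col X - 1. \<Sum>l < dim_row X - 1.
        X $$ (i, insert_index j k) * mat_inv (mat_delete X i j) $$ (k, l) * X $$ (insert_index i l, j))"

text \<open>Theta_n = (phi^{(i+j-2)})_{1<=i,j<=n}; with 0-based indices the (i,j) entry is D^(i+j) phi.\<close>
definition Theta :: "('a \<Rightarrow> 'a) \<Rightarrow> 'a \<Rightarrow> nat \<Rightarrow> 'a mat" where
  "Theta D \<phi> n = mat n n (\<lambda>(i, j). (D ^^ (i + j)) \<phi>)"

definition theta :: "('a::ring_1 \<Rightarrow> 'a) \<Rightarrow> 'a \<Rightarrow> nat \<Rightarrow> 'a" where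
  "theta D \<phi> n = qdet (Theta D \<phi> n) (n - 1) (n - 1)"

definition theta_inv :: "('a::division_ring \<Rightarrow> 'a) \<Rightarrow> 'a \<Rightarrow> nat \<Rightarrow> 'a" where
  "theta_inv D \<phi> n = (if n = 0 then 0 else inverse (theta D \<phi> n))"

end

theory Submission
  imports Defs
begin

(* Write mu_k = phi^(k) and pair polynomials q = sum q_i x^i (coefficients on the left) with
   powers of x by <q, x^j> = sum q_i mu_(i+j); the Gram matrix of this pairing is the Hankel
   matrix Theta_n. Invertibility of Theta_n gives a unique monic p_n of degree n orthogonal to
   1, ..., x^(n-1), and expanding the quasideterminant shows theta_(n+1) = <p_n, x^n>.
   Differentiating the orthogonality relations coefficientwise and using uniqueness gives
   p_n' = - theta_(n+1) theta_n^-1 p_(n-1); the same argument applied to x p_n - p_(n+1) gives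
   theta_(n+1)' theta_(n+1)^-1 = c_n - c_(n+1), where c_n is the subleading coefficient of p_n.
   Since c_n' = - theta_(n+1) theta_n^-1, one more derivative yields the identity.
   Characteristic 0 is never used. *)

lemma derivation_add: "derivation D \<Longrightarrow> D (a + b) = D a + D b"
  unfolding derivation_def by blast

lemma derivation_mult: "derivation D \<Longrightarrow> D (a * b) = D a * b + a * D b"
  unfolding derivation_def by blast

lemma derivation_zero: "derivation D \<Longrightarrow> D 0 = 0"
  using derivation_add[of D 0 0] by simp

lemma derivation_one: "derivation D \<Longrightarrow> D (1 :: 'a :: ring_1) = 0"
  using derivation_mult[of D 1 1] by simp

lemma derivation_minus: "derivation D \<Longrightarrow> D (- a) = - D a"
  using derivation_add[of D a "- a"] derivation_zero[of D]
  by (simp add: eq_neg_iff_add_eq_0 add.commute)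

lemma derivation_diff: "derivation D \<Longrightarrow> D (a - b) = D a - D b"
  using derivation_add[of D a "- b"] derivation_minus[of D b] by simp

lemma derivation_sum: "derivation D \<Longrightarrow> D (sum f A) = (\<Sum>x\<in>A. D (f x))"
  by (induction A rule: infinite_finite_induct) (auto simp: derivation_add derivation_zero)

lemma mat_inv_inverts:
  assumes "invertible_mat A" and A: "A \<in> carrier_mat n n"
  shows "A * mat_inv A = 1\<^sub>m n" "mat_inv A * A = 1\<^sub>m n" "mat_inv A \<in> carrier_mat n n"
proof -
  obtain B where "inverts_mat A B \<and> inverts_mat B A"
    using assms(1) unfolding invertible_mat_def by blast
  then have "inverts_mat A (mat_inv A) \<and> inverts_mat (mat_inv A) A"
    unfolding mat_inv_def by (rule someI)
  then have right: "A * mat_inv A = 1\<^sub>m n" and left: "mat_inv A * A = 1\<^sub>m (dim_row (mat_inv A))"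
    using A unfolding inverts_mat_def by auto
  have "dim_col (mat_inv A) = n" using arg_cong[OF right, of dim_col] by simp
  moreover have "dim_row (mat_inv A) = n" using arg_cong[OF left, of dim_col] A by simp
  ultimately show "A * mat_inv A = 1\<^sub>m n" "mat_inv A * A = 1\<^sub>m n" "mat_inv A \<in> carrier_mat n n"
    using right left by auto
qed

lemma Theta_carrier: "Theta D \<phi> n \<in> carrier_mat n n"
  by (simp add: Theta_def)

lemma mat_delete_Theta_Suc: "mat_delete (Theta D \<phi> (Suc n)) n n = Theta D \<phi> n"
  by (rule eq_matI) (auto simp: mat_delete_def Theta_def)

lemma invertible_Theta_if_qdet_defined:
  assumes "qdet_defined (Theta D \<phi> (Suc n)) n n" and "n \<ge> 1"
  shows "invertible_mat (Theta D \<phi> n)"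
  using assms unfolding qdet_defined_def mat_delete_Theta_Suc by (simp add: Theta_def)

lemma theta_Suc_expand:
  "theta D \<phi> (Suc n) = (D ^^ (n + n)) \<phi> -
     (\<Sum>k<n. \<Sum>l<n. (D ^^ (n + k)) \<phi> * mat_inv (Theta D \<phi> n) $$ (k, l) * (D ^^ (l + n)) \<phi>)"
  unfolding theta_def qdet_def by (simp add: mat_delete_Theta_Suc) (simp add: Theta_def)

locale hankel_derivation =
  fixes D :: "'a::division_ring \<Rightarrow> 'a" and \<phi> :: 'a
  assumes derivation_D: "derivation D"
    and invertible_Theta: "n \<ge> 1 \<Longrightarrow> invertible_mat (Theta D \<phi> n)"
    and theta_nonzero: "n \<ge> 1 \<Longrightarrow> theta D \<phi> n \<noteq> 0"
begin

definition moment :: "nat \<Rightarrow> 'a" where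
  "moment k = (D ^^ k) \<phi>"

lemma D_moment [simp]: "D (moment k) = moment (Suc k)"
  by (simp add: moment_def)

lemma Theta_inverse_moment_sum:
  assumes "k < n" "j < n"
  shows "(\<Sum>i<n. mat_inv (Theta D \<phi> n) $$ (k, i) * moment (i + j)) = of_bool (k = j)"
proof -
  have n: "n \<ge> 1" using assms by simp
  note inv = mat_inv_inverts[OF invertible_Theta[OF n] Theta_carrier]
  have "(\<Sum>i<n. mat_inv (Theta D \<phi> n) $$ (k, i) * moment (i + j))
      = (mat_inv (Theta D \<phi> n) * Theta D \<phi> n) $$ (k, j)"
    using inv(3) assms
    by (auto simp: Theta_def scalar_prod_def moment_def atLeast0LessThan intro!: sum.cong)
  also have "\<dots> = of_bool (k = j)" using inv(2) assms by simp
  finally show ?thesis .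
qed

lemma moment_Theta_inverse_sum:
  assumes "i < n" "l < n"
  shows "(\<Sum>j<n. moment (i + j) * mat_inv (Theta D \<phi> n) $$ (j, l)) = of_bool (i = l)"
proof -
  have n: "n \<ge> 1" using assms by simp
  note inv = mat_inv_inverts[OF invertible_Theta[OF n] Theta_carrier]
  have "(\<Sum>j<n. moment (i + j) * mat_inv (Theta D \<phi> n) $$ (j, l))
      = (Theta D \<phi> n * mat_inv (Theta D \<phi> n)) $$ (i, l)"
    using inv(3) assms
    by (auto simp: Theta_def scalar_prod_def moment_def atLeast0LessThan intro!: sum.cong)
  also have "\<dots> = of_bool (i = l)" using inv(1) assms by simp
  finally show ?thesis .
qed

lemma hankel_coeffs_eq_0:
  assumes "\<And>j. j < n \<Longrightarrow> (\<Sum>i<n. q i * moment (i + j)) = 0" and "l < n"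
  shows "q l = 0"
proof -
  have "0 = (\<Sum>j<n. (\<Sum>i<n. q i * moment (i + j)) * mat_inv (Theta D \<phi> n) $$ (j, l))"
    using assms(1) by simp
  also have "\<dots> = (\<Sum>i<n. q i * (\<Sum>j<n. moment (i + j) * mat_inv (Theta D \<phi> n) $$ (j, l)))"
    by (simp add: sum_distrib_left sum_distrib_right mult.assoc) (rule sum.swap)
  also have "\<dots> = q l"
    using moment_Theta_inverse_sum assms(2) by simp
  finally show ?thesis by simp
qed

text \<open>\<^term>\<open>opoly n i\<close> is the coefficient of \<open>x^i\<close> in \<open>p_n\<close>, and
  \<^term>\<open>opoly_moment n j\<close> is \<open><p_n, x^j>\<close>.\<close>

definition opoly :: "nat \<Rightarrow> nat \<Rightarrow> 'a" where
  "opoly n i = (if i < n then - (\<Sum>k<n. moment (n + k) * mat_inv (Theta D \<phi> n) $$ (k, i))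
                else of_bool (i = n))"

definition opoly_moment :: "nat \<Rightarrow> nat \<Rightarrow> 'a" where
  "opoly_moment n j = (\<Sum>i<Suc n. opoly n i * moment (i + j))"

lemma opoly_same [simp]: "opoly n n = 1"
  by (simp add: opoly_def)

lemma opoly_moment_eq: "opoly_moment n j = (\<Sum>i<n. opoly n i * moment (i + j)) + moment (n + j)"
  by (simp add: opoly_moment_def)

lemma opoly_moment_orthogonal:
  assumes "j < n"
  shows "opoly_moment n j = 0"
proof -
  have "(\<Sum>i<n. opoly n i * moment (i + j))
      = - (\<Sum>k<n. moment (n + k) * (\<Sum>i<n. mat_inv (Theta D \<phi> n) $$ (k, i) * moment (i + j)))"
    by (simp add: opoly_def sum_distrib_left sum_distrib_right sum_negf mult.assoc) (rule sum.swap)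
  also have "\<dots> = - moment (n + j)"
    using Theta_inverse_moment_sum assms by simp
  finally show ?thesis by (simp add: opoly_moment_eq)
qed

lemma theta_Suc_eq_opoly_moment: "theta D \<phi> (Suc n) = opoly_moment n n"
  by (simp add: theta_Suc_expand opoly_moment_eq opoly_def moment_def sum_distrib_left
      sum_distrib_right sum_negf mult.assoc) (rule sum.swap)

lemma opoly_moment_upto:
  "j \<le> n \<Longrightarrow> opoly_moment n j = (if j < n then 0 else theta D \<phi> (Suc n))"
  by (simp add: opoly_moment_orthogonal theta_Suc_eq_opoly_moment)

lemma theta_inv_Suc: "theta_inv D \<phi> (Suc n) = inverse (theta D \<phi> (Suc n))"
  by (simp add: theta_inv_def)

lemma eq_scaled_prev_opoly:
  assumes pairing: "\<And>j. j < n \<Longrightarrow> (\<Sum>i<n. q i * moment (i + j)) = (if Suc j = n then c else 0)"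
    and "l < n"
  shows "q l = c * theta_inv D \<phi> n * opoly (n - 1) l"
proof -
  obtain k where n: "n = Suc k" using \<open>l < n\<close> by (cases n) auto
  define r where "r i = q i - c * theta_inv D \<phi> n * opoly k i" for i
  have "r l = 0"
  proof (rule hankel_coeffs_eq_0[OF _ \<open>l < n\<close>])
    fix j assume "j < n"
    have "(\<Sum>i<n. r i * moment (i + j))
        = (\<Sum>i<n. q i * moment (i + j)) - c * theta_inv D \<phi> n * opoly_moment k j"
      unfolding r_def opoly_moment_def n[symmetric]
      by (simp add: left_diff_distrib sum_subtractf sum_distrib_left mult.assoc)
    also have "\<dots> = 0"
      using pairing[OF \<open>j < n\<close>] opoly_moment_upto[of j k] \<open>j < n\<close> theta_nonzero[of n]
      by (auto simp: n theta_inv_Suc mult.assoc)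
    finally show "(\<Sum>i<n. r i * moment (i + j)) = 0" .
  qed
  then show ?thesis by (simp add: r_def n)
qed

lemma D_opoly_moment:
  "D (opoly_moment n j) = (\<Sum>i<n. D (opoly n i) * moment (i + j)) + opoly_moment n (Suc j)"
proof -
  have "D (opoly_moment n j)
      = (\<Sum>i<Suc n. D (opoly n i) * moment (i + j)) + opoly_moment n (Suc j)"
    unfolding opoly_moment_def
    by (simp only: derivation_sum[OF derivation_D] derivation_mult[OF derivation_D] sum.distrib
        D_moment add_Suc_right)
  then show ?thesis by (simp add: derivation_one[OF derivation_D])
qed

lemma D_opoly:
  assumes "i < n"
  shows "D (opoly n i) = - theta D \<phi> (Suc n) * theta_inv D \<phi> n * opoly (n - 1) i"
proof (rule eq_scaled_prev_opoly[OF _ assms])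
  fix j assume "j < n"
  then show "(\<Sum>i<n. D (opoly n i) * moment (i + j))
      = (if Suc j = n then - theta D \<phi> (Suc n) else 0)"
    using D_opoly_moment[of n j] opoly_moment_orthogonal[of j n] opoly_moment_upto[of "Suc j" n]
    by (auto simp: derivation_zero[OF derivation_D] eq_neg_iff_add_eq_0)
qed

definition subleading :: "nat \<Rightarrow> 'a" where
  "subleading n = (if n = 0 then 0 else opoly n (n - 1))"

lemma D_subleading: "D (subleading n) = - theta D \<phi> (Suc n) * theta_inv D \<phi> n"
  by (cases n) (simp_all add: subleading_def D_opoly derivation_zero[OF derivation_D] theta_inv_def)

definition shift_opoly_diff :: "nat \<Rightarrow> nat \<Rightarrow> 'a" where
  "shift_opoly_diff n i = (if i = 0 then 0 else opoly n (i - 1)) - opoly (Suc n) i"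

lemma shift_opoly_diff_top: "shift_opoly_diff n n = subleading n - subleading (Suc n)"
  by (cases n) (simp_all add: shift_opoly_diff_def subleading_def)

lemma shift_opoly_diff_moment:
  assumes "j \<le> n"
  shows "(\<Sum>i<Suc n. shift_opoly_diff n i * moment (i + j)) = opoly_moment n (Suc j)"
proof -
  have "(\<Sum>i<Suc n. shift_opoly_diff n i * moment (i + j))
      = (\<Sum>i<Suc (Suc n). shift_opoly_diff n i * moment (i + j))"
    by (simp add: shift_opoly_diff_def)
  also have "\<dots> = (\<Sum>i<Suc (Suc n). (if i = 0 then 0 else opoly n (i - 1)) * moment (i + j))
      - opoly_moment (Suc n) j"
    unfolding shift_opoly_diff_def opoly_moment_def
    by (simp only: left_diff_distrib sum_subtractf)
  also have "(\<Sum>i<Suc (Suc n). (if i = 0 then 0 else opoly n (i - 1)) * moment (i + j))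
      = opoly_moment n (Suc j)"
    unfolding sum.lessThan_Suc_shift[of _ "Suc n"] opoly_moment_def by simp
  also have "opoly_moment (Suc n) j = 0"
    using opoly_moment_orthogonal assms by simp
  finally show ?thesis by simp
qed

lemma opoly_moment_Suc_same:
  "opoly_moment n (Suc n) = (subleading n - subleading (Suc n)) * theta D \<phi> (Suc n)
     + theta D \<phi> (Suc n) * theta_inv D \<phi> n * (\<Sum>i<n. opoly (n - 1) i * moment (i + n))"
proof -
  define a where "a = subleading n - subleading (Suc n)"
  define r where "r i = shift_opoly_diff n i - a * opoly n i" for i
  have pairing_r: "(\<Sum>i<Suc n. r i * moment (i + j)) = opoly_moment n (Suc j) - a * opoly_moment n j"
    if "j \<le> n" for j
  proof -
    have "(\<Sum>i<Suc n. r i * moment (i + j))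
        = (\<Sum>i<Suc n. shift_opoly_diff n i * moment (i + j)) - a * opoly_moment n j"
      unfolding r_def opoly_moment_def
      by (simp only: left_diff_distrib sum_subtractf sum_distrib_left mult.assoc)
    then show ?thesis using shift_opoly_diff_moment[OF that] by simp
  qed
  have r_top: "r n = 0"
    by (simp add: r_def a_def shift_opoly_diff_top)
  have r_below: "r i = theta D \<phi> (Suc n) * theta_inv D \<phi> n * opoly (n - 1) i" if "i < n" for i
  proof (rule eq_scaled_prev_opoly[OF _ that])
    fix j assume "j < n"
    then show "(\<Sum>i<n. r i * moment (i + j)) = (if Suc j = n then theta D \<phi> (Suc n) else 0)"
      using pairing_r[of j] r_top opoly_moment_orthogonal[of j n] opoly_moment_upto[of "Suc j" n]
      by auto
  qed
  have "opoly_moment n (Suc n) = (\<Sum>i<Suc n. r i * moment (i + n)) + a * opoly_moment n n"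
    using pairing_r[of n] by simp
  also have "(\<Sum>i<Suc n. r i * moment (i + n))
      = theta D \<phi> (Suc n) * theta_inv D \<phi> n * (\<Sum>i<n. opoly (n - 1) i * moment (i + n))"
    using r_top r_below by (auto simp: sum_distrib_left mult.assoc intro!: sum.cong)
  finally show ?thesis
    by (simp add: a_def theta_Suc_eq_opoly_moment add.commute)
qed

lemma D_theta_Suc:
  "D (theta D \<phi> (Suc n)) = (subleading n - subleading (Suc n)) * theta D \<phi> (Suc n)"
proof -
  have "D (theta D \<phi> (Suc n))
      = (\<Sum>i<n. D (opoly n i) * moment (i + n)) + opoly_moment n (Suc n)"
    by (simp add: theta_Suc_eq_opoly_moment D_opoly_moment)
  also have "(\<Sum>i<n. D (opoly n i) * moment (i + n))
      = - (theta D \<phi> (Suc n) * theta_inv D \<phi> n * (\<Sum>i<n. opoly (n - 1) i * moment (i + n)))"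
    by (auto simp: D_opoly sum_distrib_left sum_negf mult.assoc intro!: sum.cong)
  finally show ?thesis
    by (simp add: opoly_moment_Suc_same)
qed

lemma D_log_derivative_theta_Suc:
  "D (D (theta D \<phi> (Suc n)) * theta_inv D \<phi> (Suc n))
     = theta D \<phi> (Suc (Suc n)) * theta_inv D \<phi> (Suc n) - theta D \<phi> (Suc n) * theta_inv D \<phi> n"
proof -
  have "D (theta D \<phi> (Suc n)) * theta_inv D \<phi> (Suc n) = subleading n - subleading (Suc n)"
    using theta_nonzero[of "Suc n"] by (simp add: D_theta_Suc theta_inv_Suc mult.assoc)
  then show ?thesis
    by (simp add: derivation_diff[OF derivation_D] D_subleading)
qed

end

theorem proposition4p11:
  fixes D :: "'a::{division_ring, ring_char_0} \<Rightarrow> 'a" and \<phi> :: 'a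
  assumes "derivation D"
    and "\<forall>m\<ge>1. qdet_defined (Theta D \<phi> m) (m - 1) (m - 1)"
    and "\<forall>m\<ge>1. theta D \<phi> m \<noteq> 0"
  shows "\<forall>n\<ge>1. D (D (theta D \<phi> n) * theta_inv D \<phi> n)
           = theta D \<phi> (n + 1) * theta_inv D \<phi> n - theta D \<phi> n * theta_inv D \<phi> (n - 1)"
proof (intro allI impI)
  interpret hankel_derivation D \<phi>
  proof
    show "derivation D" by fact
    show "invertible_mat (Theta D \<phi> m)" if "m \<ge> 1" for m
      using invertible_Theta_if_qdet_defined[OF _ that] assms(2)[rule_format, of "Suc m"] by simp
    show "theta D \<phi> m \<noteq> 0" if "m \<ge> 1" for m
      using assms(3) that by blast
  qed
  fix n :: nat
  assume "n \<ge> 1"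
  then obtain k where n: "n = Suc k" by (cases n) auto
  show "D (D (theta D \<phi> n) * theta_inv D \<phi> n)
      = theta D \<phi> (n + 1) * theta_inv D \<phi> n - theta D \<phi> n * theta_inv D \<phi> (n - 1)"
    using D_log_derivative_theta_Suc[of k] by (simp add: n)
qed

end
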